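(* In a pairing heap with $n$ elements, decrease-key takes $O(\log n)$ amortized time with respect to the potential $\Phi$.
   Context: A pairing heap is a heap-ordered rooted ordered tree (the "general view"): each node stores a key, has zero or more children ordered from left to right, and every child has a strictly larger key than its parent. It is stored in the "binary view" via the leftmost-child/right-sibling correspondence: the left child of $x$ in the binary view is the leftmost child of $x$ in the general view, and the right child of $x$ in the binary view is the next sibling to the right of $x$ in the general view. Pairing two heap-ordered trees makes the root with the larger key the leftmost child of the other root. Operations: make-heap returns an empty heap; get-min returns the root key; insert creates a new node, which becomes the root if the heap is empty and otherwise is paired with the root; decrease-key$(p,y)$ (with $y$ strictly less than the current key of the node $p$) sets the key to $y$ and, if the node is not the root, detaches it (with its general-view subtree) from its parent and pairs it with the root; delete-min removes the root, then (first pass) pairs the root's former children in consecutive pairs from left to right, then (second pass) repeatedly pairs the two rightmost remaining trees until one tree remains. The actual cost of an operation is $1$ plus the number of pairings it performs, and its amortized cost is its actual cost plus the resulting change in $\Phi$. The heap is assumed to arise from a sequence of such operations starting from an empty heap. Sticky size: $N$ is initially $1$; after every heap operation, if $n \ge 2N$ then $N$ is doubled, and if $n \le N/2$ then $N$ is halved, where $n$ is the current number of elements. Let $\lg = \log_2$. For a node $x$, $|x|$ is the number of nodes in the subtree rooted at $x$ in the binary view, and $x_L$, $x_R$ are its left and right children in the binary view (a missing child has size $0$). Node potential $\phi_x$: if $|x_L| > \lg N$ and $|x_R| > \lg N$, $x$ is large and $\phi_x = 400 + 100\lg|x|$; if $|x_L| \le \lg N < |x_R|$, $x$ is mixed and $\phi_x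 = 400 + 100\frac{|x_L|}{\lg N}\lg|x|$ (symmetrically, if $|x_R| \le \lg N < |x_L|$, $\phi_x = 400 + 100\frac{|x_R|}{\lg N}\lg|x|$); if both $|x_L|,|x_R| \le \lg N$, $x$ is small and $\phi_x = 0$. Edge potential: an edge of the binary view joining a large node to its right child that is also large has potential $-7$; all other edges have potential $0$. $\Phi = 900|N-n| + \sum_x \phi_x + (\text{sum of edge potentials})$. *)

theory Defs
  imports Complex_Main "HOL-Library.Tree"
begin

text \<open>A pairing heap is stored in its binary view (leftmost-child / right-sibling).
  Each node carries a pair (identity, key); identities let decrease-key refer to a node.
  A heap is either Leaf (empty) or a Node whose right subtree is Leaf (the root has no siblings).\<close>

type_synonym node = "nat \<times> real"
type_synonym heap = "node tree"

definition nid :: "node \<Rightarrow> nat" where "nid a = fst a"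
definition key :: "node \<Rightarrow> real" where "key a = snd a"

fun link :: "heap \<Rightarrow> heap \<Rightarrow> heap" where
  "link Leaf t = t"
| "link t Leaf = t"
| "link (Node l1 a1 r1) (Node l2 a2 r2) =
     (if key a1 \<le> key a2 then Node (Node l2 a2 l1) a1 Leaf
      else Node (Node l1 a1 l2) a2 Leaf)"

text \<open>The list of general-view children, given the binary-view left subtree of a node.\<close>
fun children :: "heap \<Rightarrow> heap list" where
  "children Leaf = []"
| "children (Node l a r) = Node l a Leaf # children r"

fun pass1 :: "heap list \<Rightarrow> heap list" where
  "pass1 (t1 # t2 # ts) = link t1 t2 # pass1 ts"
| "pass1 ts = ts"

fun pass2 :: "heap list \<Rightarrow> heap" where
  "pass2 [] = Leaf"
| "pass2 [t] = t"
| "pass2 (t # ts) = link t (pass2 ts)"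

fun del_min :: "heap \<Rightarrow> heap" where
  "del_min Leaf = Leaf"
| "del_min (Node l a r) = pass2 (pass1 (children l))"

definition insert_heap :: "nat \<Rightarrow> real \<Rightarrow> heap \<Rightarrow> heap" where
  "insert_heap i k h = link h (Node Leaf (i, k) Leaf)"

text \<open>cut i t: removes the node with identity i together with its general-view subtree
  (its binary-view left subtree) from t; returns the remaining tree and the removed
  subtree as a root (Leaf if i does not occur).\<close>
fun cut :: "nat \<Rightarrow> heap \<Rightarrow> heap \<times> heap" where
  "cut i Leaf = (Leaf, Leaf)"
| "cut i (Node l a r) =
     (if nid a = i then (r, Node l a Leaf)
      else (case cut i l of (l', s1) \<Rightarrow>
             (case cut i r of (r', s2) \<Rightarrow>
               (Node l' a r', if s1 = Leaf then s2 else s1))))"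

fun set_root_key :: "real \<Rightarrow> heap \<Rightarrow> heap" where
  "set_root_key y Leaf = Leaf"
| "set_root_key y (Node l a r) = Node l (nid a, y) r"

definition decrease_key :: "nat \<Rightarrow> real \<Rightarrow> heap \<Rightarrow> heap" where
  "decrease_key i y h =
     (case h of Leaf \<Rightarrow> Leaf
      | Node l a r \<Rightarrow>
          if nid a = i then Node l (i, y) r
          else (case cut i h of (h', s) \<Rightarrow> link h' (set_root_key y s)))"

text \<open>Actual cost of decrease-key: 1 plus the number of pairings (one pairing iff
  the node is not the root).\<close>
definition decrease_key_cost :: "nat \<Rightarrow> heap \<Rightarrow> real" where
  "decrease_key_cost i h =
     (case h of Leaf \<Rightarrow> 1 | Node l a r \<Rightarrow> if nid a = i then 1 else 2)"

datatype heap_op = Insert nat real | GetMin | DeleteMin | DecreaseKey nat real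

definition ids :: "heap \<Rightarrow> nat set" where "ids h = nid ` set_tree h"

fun valid_op :: "heap_op \<Rightarrow> heap \<Rightarrow> bool" where
  "valid_op (Insert i k) h = (i \<notin> ids h)"
| "valid_op GetMin h = (h \<noteq> Leaf)"
| "valid_op DeleteMin h = (h \<noteq> Leaf)"
| "valid_op (DecreaseKey i y) h = (\<exists>a \<in> set_tree h. nid a = i \<and> y < key a)"

fun exec_op :: "heap_op \<Rightarrow> heap \<Rightarrow> heap" where
  "exec_op (Insert i k) h = insert_heap i k h"
| "exec_op GetMin h = h"
| "exec_op DeleteMin h = del_min h"
| "exec_op (DecreaseKey i y) h = decrease_key i y h"

definition sticky_update :: "nat \<Rightarrow> real \<Rightarrow> real" where
  "sticky_update n N =
     (let N1 = (if real n \<ge> 2 * N then 2 * N else N)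
      in if real n \<le> N1 / 2 then N1 / 2 else N1)"

definition step :: "heap \<times> real \<Rightarrow> heap_op \<Rightarrow> heap \<times> real" where
  "step s op = (let h' = exec_op op (fst s) in (h', sticky_update (size h') (snd s)))"

inductive reachable :: "heap \<times> real \<Rightarrow> bool" where
  init: "reachable (Leaf, 1)"
| step: "reachable (h, N) \<Longrightarrow> valid_op op h \<Longrightarrow> reachable (step (h, N) op)"

definition large :: "real \<Rightarrow> heap \<Rightarrow> bool" where
  "large N t = (case t of Leaf \<Rightarrow> False
     | Node l a r \<Rightarrow> real (size l) > log 2 N \<and> real (size r) > log 2 N)"

definition node_pot :: "real \<Rightarrow> heap \<Rightarrow> real" where
  "node_pot N t = (case t of Leaf \<Rightarrow> 0
     | Node l a r \<Rightarrow>
        (let g = log 2 N; L = real (size l); R = real (size r); s = real (size t) in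
         if L > g \<and> R > g then 400 + 100 * log 2 s
         else if L \<le> g \<and> g < R then 400 + 100 * (L / g) * log 2 s
         else if R \<le> g \<and> g < L then 400 + 100 * (R / g) * log 2 s
         else 0))"

fun sum_node_pot :: "real \<Rightarrow> heap \<Rightarrow> real" where
  "sum_node_pot N Leaf = 0"
| "sum_node_pot N (Node l a r) = node_pot N (Node l a r) + sum_node_pot N l + sum_node_pot N r"

fun sum_edge_pot :: "real \<Rightarrow> heap \<Rightarrow> real" where
  "sum_edge_pot N Leaf = 0"
| "sum_edge_pot N (Node l a r) =
     (if large N (Node l a r) \<and> large N r then -7 else 0) + sum_edge_pot N l + sum_edge_pot N r"

definition Phi :: "real \<Rightarrow> heap \<Rightarrow> real" where
  "Phi N h = 900 * \<bar>N - real (size h)\<bar> + sum_node_pot N h + sum_edge_pot N h"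

end

theory Submission
  imports Defs "HOL-Library.Tree_Multiset"
begin

text \<open>Decrease-key keeps the number of elements, so the sticky size N and the term 900|N - n|
  of the potential do not change. Cutting out the general-view subtree s of the node only shrinks
  subtrees on the binary-view path to it; node potentials are monotone in the sizes of the
  children, so they do not increase. A node on the path stops being large only if its child on
  the path had at most lg N + |s| nodes, while every large node on the path has more than
  lg N + |s| nodes; hence at most one node stops being large, and at most three edges of
  potential -7 are lost. Relinking creates two nodes of potential at most 400 + 100 lg n each.\<close>

section \<open>Heap shape and node identities\<close>

definition is_root :: "heap \<Rightarrow> bool" where
  "is_root h = (case h of Leaf \<Rightarrow> True | Node l a r \<Rightarrow> r = Leaf)"

definition id_mset :: "heap \<Rightarrow> nat multiset" where
  "id_mset h = image_mset nid (mset_tree h)"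

definition distinct_ids :: "heap \<Rightarrow> bool" where
  "distinct_ids h = distinct (map nid (inorder h))"

lemma is_root_simps [simp]:
  "is_root Leaf"
  "is_root (Node l a r) \<longleftrightarrow> r = Leaf"
  by (simp_all add: is_root_def)

lemma is_rootE:
  assumes "is_root h" "h \<noteq> Leaf"
  obtains l a where "h = Node l a Leaf"
  using assms by (cases h) auto

lemma ids_simps [simp]:
  "ids Leaf = {}"
  "ids (Node l a r) = insert (nid a) (ids l \<union> ids r)"
  by (auto simp: ids_def)

lemma ids_eq_set_inorder: "ids h = set (map nid (inorder h))"
  by (simp add: ids_def)

lemma size_id_mset: "size (id_mset h) = size h"
  by (simp add: id_mset_def)

lemma size_eq_if_id_mset_eq: "id_mset h' = id_mset h \<Longrightarrow> size h' = size h"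
  using size_id_mset[of h'] size_id_mset[of h] by simp

lemma distinct_ids_iff_id_mset:
  "id_mset h' = id_mset h \<Longrightarrow> distinct_ids h' \<longleftrightarrow> distinct_ids h"
  unfolding distinct_ids_def id_mset_def
  by (rule mset_eq_imp_distinct_iff) (simp add: mset_map)

lemma distinct_ids_Node:
  "distinct_ids (Node l a r) \<longleftrightarrow>
     distinct_ids l \<and> distinct_ids r \<and> nid a \<notin> ids l \<and> nid a \<notin> ids r \<and> ids l \<inter> ids r = {}"
  by (auto simp: distinct_ids_def ids_eq_set_inorder)

lemma mset_tree_link:
  "is_root t1 \<Longrightarrow> is_root t2 \<Longrightarrow> mset_tree (link t1 t2) = mset_tree t1 + mset_tree t2"
  by (cases "(t1, t2)" rule: link.cases) auto

lemma is_root_link: "is_root t1 \<Longrightarrow> is_root t2 \<Longrightarrow> is_root (link t1 t2)"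
  by (cases "(t1, t2)" rule: link.cases) auto

lemma is_root_children: "\<forall>t \<in> set (children l). is_root t"
  by (induction l) auto

lemma mset_children: "sum_list (map mset_tree (children l)) = mset_tree l"
  by (induction l) auto

lemma is_root_pass1: "\<forall>t \<in> set ts. is_root t \<Longrightarrow> \<forall>t \<in> set (pass1 ts). is_root t"
  by (induction ts rule: pass1.induct) (auto simp: is_root_link)

lemma mset_pass1:
  "\<forall>t \<in> set ts. is_root t \<Longrightarrow> sum_list (map mset_tree (pass1 ts)) = sum_list (map mset_tree ts)"
  by (induction ts rule: pass1.induct) (auto simp: mset_tree_link)

lemma is_root_pass2: "\<forall>t \<in> set ts. is_root t \<Longrightarrow> is_root (pass2 ts)"
  by (induction ts rule: pass2.induct) (auto simp: is_root_link)

lemma mset_pass2: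
  "\<forall>t \<in> set ts. is_root t \<Longrightarrow> mset_tree (pass2 ts) = sum_list (map mset_tree ts)"
  by (induction ts rule: pass2.induct) (auto simp: mset_tree_link is_root_pass2)

lemma is_root_del_min: "is_root (del_min h)"
  by (cases h) (simp_all add: is_root_pass2[OF is_root_pass1[OF is_root_children]])

lemma mset_del_min: "mset_tree (del_min (Node l a r)) = mset_tree l"
  by (simp add: mset_pass2[OF is_root_pass1[OF is_root_children]]
      mset_pass1[OF is_root_children] mset_children)

lemma cut_not_in_ids: "i \<notin> ids t \<Longrightarrow> cut i t = (t, Leaf)"
  by (induction t) auto

lemma cut_Node_left:
  assumes "distinct_ids (Node l a r)" "i \<in> ids l" "cut i l = (l', s)"
  shows "cut i (Node l a r) = (Node l' a r, s)"
proof -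
  have "nid a \<noteq> i" "i \<notin> ids r" using assms(1,2) by (auto simp: distinct_ids_Node)
  then show ?thesis using assms(3) by (simp add: cut_not_in_ids)
qed

lemma cut_Node_right:
  assumes "distinct_ids (Node l a r)" "i \<in> ids r" "cut i r = (r', s)"
  shows "cut i (Node l a r) = (Node l a r', s)"
proof -
  have "nid a \<noteq> i" "i \<notin> ids l" using assms(1,2) by (auto simp: distinct_ids_Node)
  then show ?thesis using assms(3) by (simp add: cut_not_in_ids)
qed

lemma cut_in_ids:
  assumes "distinct_ids t" "i \<in> ids t" "cut i t = (t', s)"
  shows "\<exists>ls b. s = Node ls b Leaf \<and> mset_tree t = mset_tree t' + mset_tree s"
  using assms
proof (induction t arbitrary: t' s)
  case Leaf
  then show ?case by simp
next
  case (Node l a r)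
  consider "nid a = i" | "nid a \<noteq> i" "i \<in> ids l" | "nid a \<noteq> i" "i \<in> ids r"
    using Node.prems(2) by auto
  then show ?case
  proof cases
    case 1
    then show ?thesis using Node.prems(3) by auto
  next
    case 2
    obtain l'' s'' where cl: "cut i l = (l'', s'')" by fastforce
    with Node.prems 2 have "t' = Node l'' a r" "s = s''"
      by (simp_all add: cut_Node_left del: cut.simps)
    then show ?thesis
      using Node.IH(1)[OF _ 2(2) cl] Node.prems(1) by (auto simp: distinct_ids_Node)
  next
    case 3
    obtain r'' s'' where cr: "cut i r = (r'', s'')" by fastforce
    with Node.prems 3 have "t' = Node l a r''" "s = s''"
      by (simp_all add: cut_Node_right del: cut.simps)
    then show ?thesis
      using Node.IH(2)[OF _ 3(2) cr] Node.prems(1) by (auto simp: distinct_ids_Node)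
  qed
qed

lemma cut_size:
  "distinct_ids t \<Longrightarrow> i \<in> ids t \<Longrightarrow> cut i t = (t', s) \<Longrightarrow> size t = size t' + size s"
  using cut_in_ids[of t i t' s] by (metis size_mset_tree size_union)

lemma decrease_key_cases:
  assumes "is_root h" "distinct_ids h" "i \<in> ids h"
  obtains (root) l a where "h = Node l a Leaf" "nid a = i"
      "decrease_key i y h = Node l (i, y) Leaf"
  | (cut) l a l' ls b where "h = Node l a Leaf" "nid a \<noteq> i"
      "cut i l = (l', Node ls b Leaf)" "mset_tree l = mset_tree l' + mset_tree (Node ls b Leaf)"
      "decrease_key i y h = link (Node l' a Leaf) (Node ls (nid b, y) Leaf)"
proof -
  obtain l a where h: "h = Node l a Leaf" using assms(1,3) by (auto elim: is_rootE)
  show thesis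
  proof (cases "nid a = i")
    case True
    then show thesis using h by (intro root) (simp_all add: decrease_key_def)
  next
    case False
    obtain l' s where cl: "cut i l = (l', s)" by fastforce
    have "distinct_ids l" "i \<in> ids l" using assms(2,3) h False by (auto simp: distinct_ids_Node)
    then obtain ls b where "s = Node ls b Leaf" "mset_tree l = mset_tree l' + mset_tree s"
      using cut_in_ids cl by blast
    then show thesis using h False cl by (intro cut) (simp_all add: decrease_key_def)
  qed
qed

lemma decrease_key_invar:
  assumes "is_root h" "distinct_ids h" "i \<in> ids h"
  shows "is_root (decrease_key i y h) \<and> id_mset (decrease_key i y h) = id_mset h"
  using assms
  by (cases rule: decrease_key_cases[of h i y])
    (auto simp: id_mset_def mset_tree_link is_root_link nid_def)

section \<open>Invariants of reachable states\<close>

text \<open>The empty heap needs its own range of N: when the last element is deleted, N is halved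
  to a value below 1.\<close>
definition sticky_size_ok :: "nat \<Rightarrow> real \<Rightarrow> bool" where
  "sticky_size_ok n N =
     (if n = 0 then 1/4 < N \<and> N \<le> 1 else N / 2 < real n \<and> real n < 2 * N)"

lemma sticky_size_ok_update:
  assumes "sticky_size_ok n N" "n' = n + 1 \<or> n' + 1 = n \<or> (n' = n \<and> n \<noteq> 0)"
  shows "sticky_size_ok n' (sticky_update n' N)"
proof (cases "n = 0")
  case True
  then show ?thesis using assms by (auto simp: sticky_size_ok_def sticky_update_def)
next
  case False
  have "real n < 2 * N" using assms(1) False by (simp add: sticky_size_ok_def)
  moreover have "1 \<le> real n" using False by simp
  ultimately have "1 / 2 < N" by linarith
  then show ?thesis using assms False by (auto simp: sticky_size_ok_def sticky_update_def)
qed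

lemma sticky_update_stable: "sticky_size_ok n N \<Longrightarrow> n \<noteq> 0 \<Longrightarrow> sticky_update n N = N"
  by (simp add: sticky_size_ok_def sticky_update_def)

definition heap_invar :: "heap \<Rightarrow> bool" where
  "heap_invar h = (is_root h \<and> distinct_ids h)"

lemma exec_op_invar:
  assumes "heap_invar h" "valid_op op h"
  shows "heap_invar (exec_op op h) \<and>
    (size (exec_op op h) = size h + 1 \<or> size (exec_op op h) + 1 = size h \<or>
     (size (exec_op op h) = size h \<and> h \<noteq> Leaf))"
proof (cases op)
  case (Insert i k)
  have ids: "id_mset (exec_op op h) = add_mset i (id_mset h)" and "is_root (exec_op op h)"
    using assms(1) Insert
    by (simp_all add: heap_invar_def insert_heap_def id_mset_def mset_tree_link is_root_link nid_def)
  moreover have "distinct_ids (exec_op op h)"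
  proof -
    have "mset (map nid (inorder (exec_op op h))) = mset (i # map nid (inorder h))"
      using ids by (simp add: id_mset_def mset_map)
    then have "distinct_ids (exec_op op h) = distinct (i # map nid (inorder h))"
      unfolding distinct_ids_def by (rule mset_eq_imp_distinct_iff)
    then show ?thesis using assms Insert
      by (simp add: distinct_ids_def ids_eq_set_inorder heap_invar_def)
  qed
  moreover have "size (exec_op op h) = size h + 1"
    using arg_cong[OF ids, of size] by (simp add: size_id_mset)
  ultimately show ?thesis by (simp add: heap_invar_def)
next
  case GetMin
  then show ?thesis using assms by simp
next
  case DeleteMin
  have "is_root h" "h \<noteq> Leaf" using assms DeleteMin by (simp_all add: heap_invar_def)
  then obtain l a where h: "h = Node l a Leaf" by (rule is_rootE)
  have ids: "id_mset (exec_op op h) = id_mset l"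
    using DeleteMin h mset_del_min[of l a Leaf] by (simp add: id_mset_def)
  have "distinct_ids l"
    using assms(1) h by (simp add: heap_invar_def distinct_ids_Node)
  then have "heap_invar (exec_op op h)"
    using distinct_ids_iff_id_mset[OF ids] DeleteMin is_root_del_min by (simp add: heap_invar_def)
  moreover have "size (exec_op op h) + 1 = size h"
    using arg_cong[OF ids, of size] h by (simp add: size_id_mset)
  ultimately show ?thesis by simp
next
  case (DecreaseKey i y)
  then have "i \<in> ids h" using assms(2) by (auto simp: ids_def)
  then have root: "is_root (exec_op op h)" and ids: "id_mset (exec_op op h) = id_mset h"
    using assms(1) DecreaseKey decrease_key_invar[of h i y] by (simp_all add: heap_invar_def)
  have "size (exec_op op h) = size h" using ids by (rule size_eq_if_id_mset_eq)
  moreover have "h \<noteq> Leaf" using \<open>i \<in> ids h\<close> by auto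
  ultimately show ?thesis
    using assms(1) root distinct_ids_iff_id_mset[OF ids] by (simp add: heap_invar_def)
qed

lemma reachable_invar:
  "reachable s \<Longrightarrow> heap_invar (fst s) \<and> sticky_size_ok (size (fst s)) (snd s)"
proof (induction rule: reachable.induct)
  case init
  then show ?case by (simp add: heap_invar_def distinct_ids_def sticky_size_ok_def)
next
  case (step h N op)
  then have "heap_invar (exec_op op h)"
    and "sticky_size_ok (size (exec_op op h)) (sticky_update (size (exec_op op h)) N)"
    using exec_op_invar[of h op] sticky_size_ok_update[of "size h" N "size (exec_op op h)"]
    by simp_all
  then show ?case by (simp add: step_def Let_def)
qed

section \<open>Potential\<close>

text \<open>The factor |x_L| / lg N of a mixed node, capped at 1 for a child with more than lg N
  nodes, so that all three nonzero cases of the node potential have one form.\<close>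
definition capped_ratio :: "real \<Rightarrow> real \<Rightarrow> real" where
  "capped_ratio g x = (if g < x then 1 else x / g)"

lemma capped_ratio_nonneg: "0 \<le> x \<Longrightarrow> 0 \<le> capped_ratio g x"
  by (simp add: capped_ratio_def)

lemma capped_ratio_le_one: "0 \<le> x \<Longrightarrow> capped_ratio g x \<le> 1"
  by (simp add: capped_ratio_def divide_le_eq_1, linarith)

lemma capped_ratio_mono: "0 \<le> x \<Longrightarrow> x \<le> y \<Longrightarrow> capped_ratio g x \<le> capped_ratio g y"
  by (auto simp: capped_ratio_def divide_le_eq_1 divide_right_mono)

lemma node_pot_Node:
  "node_pot N (Node l a r) =
     (if real (size l) \<le> log 2 N \<and> real (size r) \<le> log 2 N then 0
      else 400 + 100 * capped_ratio (log 2 N) (size l) * capped_ratio (log 2 N) (size r)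
                 * log 2 (size (Node l a r)))"
  by (auto simp: node_pot_def capped_ratio_def Let_def)

lemma node_pot_nonneg: "0 \<le> node_pot N t"
  by (cases t) (simp add: node_pot_def, simp add: node_pot_Node capped_ratio_nonneg)

lemma node_pot_le: "node_pot N (Node l a r) \<le> 400 + 100 * log 2 (size (Node l a r))"
proof -
  let ?p = "capped_ratio (log 2 N) (size l) * capped_ratio (log 2 N) (size r)"
  have "?p \<le> 1" "0 \<le> log 2 (size (Node l a r))"
    by (simp_all add: mult_le_one capped_ratio_nonneg capped_ratio_le_one)
  then have "?p * log 2 (size (Node l a r)) \<le> log 2 (size (Node l a r))"
    by (simp add: mult_left_le_one_le capped_ratio_nonneg)
  then show ?thesis by (simp add: node_pot_Node mult.assoc)
qed

lemma node_pot_mono: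
  assumes "size l' \<le> size l" "size r' \<le> size r"
  shows "node_pot N (Node l' a r') \<le> node_pot N (Node l b r)"
proof -
  let ?c = "capped_ratio (log 2 N)"
  have "?c (size l') * ?c (size r') \<le> ?c (size l) * ?c (size r)"
    using assms by (intro mult_mono capped_ratio_mono) (simp_all add: capped_ratio_nonneg)
  moreover have "log 2 (size (Node l' a r')) \<le> log 2 (size (Node l b r))"
    using assms by simp
  ultimately have "?c (size l') * ?c (size r') * log 2 (size (Node l' a r'))
      \<le> ?c (size l) * ?c (size r) * log 2 (size (Node l b r))"
    by (rule mult_mono) (simp_all add: capped_ratio_nonneg)
  moreover have "real (size l') \<le> real (size l)" "real (size r') \<le> real (size r)"
    using assms by simp_all
  moreover have "0 \<le> node_pot N (Node l b r)" by (rule node_pot_nonneg)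
  ultimately show ?thesis by (auto simp: node_pot_Node)
qed

lemma large_simps [simp]:
  "\<not> large N Leaf"
  "large N (Node l a r) \<longleftrightarrow> log 2 N < real (size l) \<and> log 2 N < real (size r)"
  by (simp_all add: large_def)

definition tree_pot :: "real \<Rightarrow> heap \<Rightarrow> real" where
  "tree_pot N t = sum_node_pot N t + sum_edge_pot N t"

lemma tree_pot_simps [simp]:
  "tree_pot N Leaf = 0"
  "tree_pot N (Node l a r) = node_pot N (Node l a r)
     + (if large N (Node l a r) \<and> large N r then -7 else 0) + tree_pot N l + tree_pot N r"
  by (simp_all add: tree_pot_def del: large_simps)

lemma Phi_eq_tree_pot: "Phi N h = 900 * \<bar>N - real (size h)\<bar> + tree_pot N h"
  by (simp add: Phi_def tree_pot_def)

text \<open>The credit for t ceasing to be large pays for the right edge above t. A node ceasing to be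
  large has more than lg N + |s| nodes, so a smaller t contains none and only loses the edge at
  the cut.\<close>
lemma tree_pot_cut:
  assumes "distinct_ids t" "i \<in> ids t" "cut i t = (t', s)"
  shows "tree_pot N t' + tree_pot N s + (if large N t \<and> \<not> large N t' then 7 else 0)
    \<le> tree_pot N t + node_pot N s + (if size t \<le> log 2 N + size s then 7 else 21)"
  using assms
proof (induction t arbitrary: t' s)
  case Leaf
  then show ?case by simp
next
  case (Node l a r)
  let ?t = "Node l a r"
  consider "nid a = i" | "nid a \<noteq> i" "i \<in> ids l" | "nid a \<noteq> i" "i \<in> ids r"
    using Node.prems(2) by auto
  then show ?case
  proof cases
    case 1
    then have "t' = r" "s = Node l a Leaf" using Node.prems(3) by auto
    then show ?thesis using node_pot_nonneg[of N ?t] by auto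
  next
    case 2
    obtain l' s' where cl: "cut i l = (l', s')" by fastforce
    with Node.prems 2 have t': "t' = Node l' a r" and "s' = s"
      by (simp_all add: cut_Node_left del: cut.simps)
    have dl: "distinct_ids l" using Node.prems(1) by (simp add: distinct_ids_Node)
    have IH: "tree_pot N l' + tree_pot N s + (if large N l \<and> \<not> large N l' then 7 else 0)
        \<le> tree_pot N l + node_pot N s + (if size l \<le> log 2 N + size s then 7 else 21)"
      using Node.IH(1)[OF dl 2(2)] cl \<open>s' = s\<close> by simp
    have sz: "size l = size l' + size s" using cut_size[OF dl 2(2) cl] \<open>s' = s\<close> by simp
    have np: "node_pot N t' \<le> node_pot N ?t" using t' sz by (simp add: node_pot_mono)
    show ?thesis
      using IH np sz t' node_pot_nonneg[of N s] by (auto split: if_splits)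
  next
    case 3
    obtain r' s' where cr: "cut i r = (r', s')" by fastforce
    with Node.prems 3 have t': "t' = Node l a r'" and "s' = s"
      by (simp_all add: cut_Node_right del: cut.simps)
    have dr: "distinct_ids r" using Node.prems(1) by (simp add: distinct_ids_Node)
    have IH: "tree_pot N r' + tree_pot N s + (if large N r \<and> \<not> large N r' then 7 else 0)
        \<le> tree_pot N r + node_pot N s + (if size r \<le> log 2 N + size s then 7 else 21)"
      using Node.IH(2)[OF dr 3(2)] cr \<open>s' = s\<close> by simp
    have sz: "size r = size r' + size s" using cut_size[OF dr 3(2) cr] \<open>s' = s\<close> by simp
    have np: "node_pot N t' \<le> node_pot N ?t" using t' sz by (simp add: node_pot_mono)
    show ?thesis
      using IH np sz t' by (auto split: if_splits)
  qed
qed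

lemma tree_pot_link:
  "tree_pot N (link (Node l1 a1 Leaf) (Node l2 a2 Leaf))
     \<le> tree_pot N l1 + tree_pot N l2 + 800 + 200 * log 2 (size l1 + size l2 + 2)"
proof -
  have pair: "tree_pot N (Node (Node x c z) d Leaf)
      \<le> tree_pot N x + tree_pot N z + 800 + 200 * log 2 (size x + size z + 2)" for x c z d
  proof -
    have "log 2 (size (Node x c z)) \<le> log 2 (size x + size z + 2)" by simp
    then have "node_pot N (Node x c z) \<le> 400 + 100 * log 2 (size x + size z + 2)"
      using node_pot_le[of N x c z] by linarith
    moreover have "node_pot N (Node (Node x c z) d Leaf) \<le> 400 + 100 * log 2 (size x + size z + 2)"
      using node_pot_le[of N "Node x c z" d Leaf] by (simp add: add.commute)
    ultimately show ?thesis by simp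
  qed
  show ?thesis
    using pair[of l2 a2 l1 a1] pair[of l1 a1 l2 a2] by (simp add: add.commute)
qed

lemma decrease_key_amortized:
  assumes "is_root h" "distinct_ids h" "i \<in> ids h"
  shows "decrease_key_cost i h + tree_pot N (decrease_key i y h) - tree_pot N h
    \<le> 823 + 200 * log 2 (size h)"
  using assms
proof (cases rule: decrease_key_cases[of h i y])
  case (root l a)
  then show ?thesis by (simp add: decrease_key_cost_def node_pot_Node)
next
  case (cut l a l' ls b)
  have "distinct_ids l" "i \<in> ids l"
    using assms(2,3) cut(1,2) by (auto simp: distinct_ids_Node)
  from tree_pot_cut[OF this cut(3), of N]
  have "tree_pot N l' + tree_pot N ls \<le> tree_pot N l + 21"
    by (auto split: if_splits)
  moreover have "size l' + size ls + 2 = size h"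
    using cut(1) cut_size[OF \<open>distinct_ids l\<close> \<open>i \<in> ids l\<close> cut(3)] by simp
  moreover have "tree_pot N h \<ge> tree_pot N l"
    using cut(1) node_pot_nonneg[of N h] by simp
  moreover have "decrease_key_cost i h = 2"
    using cut(1,2) by (simp add: decrease_key_cost_def)
  ultimately show ?thesis
    using cut(5) tree_pot_link[of N l' a ls "(nid b, y)"] by simp
qed

theorem lemma4:
  "\<exists>c::real. \<forall>h N i y.
     reachable (h, N) \<longrightarrow> valid_op (DecreaseKey i y) h \<longrightarrow>
     decrease_key_cost i h + Phi (snd (step (h, N) (DecreaseKey i y))) (fst (step (h, N) (DecreaseKey i y)))
       - Phi N h \<le> c * max 1 (log 2 (real (size h)))"
proof (intro exI[of _ 1023] allI impI)
  fix h N i y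
  assume "reachable (h, N)" and valid: "valid_op (DecreaseKey i y) h"
  then have invar: "heap_invar h" "sticky_size_ok (size h) N"
    using reachable_invar[of "(h, N)"] by simp_all
  have "i \<in> ids h" using valid by (auto simp: ids_def)
  let ?h' = "decrease_key i y h"
  have "id_mset ?h' = id_mset h"
    using invar(1) \<open>i \<in> ids h\<close> decrease_key_invar[of h i y] by (simp add: heap_invar_def)
  then have "size ?h' = size h" by (rule size_eq_if_id_mset_eq)
  moreover have "h \<noteq> Leaf" using \<open>i \<in> ids h\<close> by auto
  ultimately have step: "step (h, N) (DecreaseKey i y) = (?h', N)"
    using sticky_update_stable[OF invar(2)] by (simp add: step_def)
  have "decrease_key_cost i h + tree_pot N ?h' - tree_pot N h \<le> 823 + 200 * log 2 (size h)"
    using invar(1) \<open>i \<in> ids h\<close> by (simp add: heap_invar_def decrease_key_amortized)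
  also have "\<dots> \<le> 1023 * max 1 (log 2 (size h))"
    by (simp add: max_def)
  finally show "decrease_key_cost i h + Phi (snd (step (h, N) (DecreaseKey i y)))
      (fst (step (h, N) (DecreaseKey i y))) - Phi N h \<le> 1023 * max 1 (log 2 (real (size h)))"
    unfolding step fst_conv snd_conv Phi_eq_tree_pot \<open>size ?h' = size h\<close> by simp
qed

end
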